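(* In the weighted Tempered Gibbs Sampling setting below, the Markov chain $\boldsymbol{x}^{(1)},\boldsymbol{x}^{(2)},\dots$ induced by the index-selection and tempered-update steps is reversible with respect to $fZ$, where $Z(\boldsymbol{x})=\zeta^{-1}\sum_{i=1}^d p_i(\boldsymbol{x})$. Moreover, the frequency of updating of the $i$-th coordinate (the stationary probability that index $i$ is selected at an iteration) equals $\zeta^{-1}\mathbb{E}_{\boldsymbol{x}\sim f}[\eta_i(\boldsymbol{x}_{-i})]$.
   Context: Let $f$ be a probability density on $\mathcal{X}=\mathcal{X}_1\times\dots\times\mathcal{X}_d$; for each $i,\boldsymbol{x}_{-i}$, $g(\cdot|\boldsymbol{x}_{-i})$ is a probability density on $\mathcal{X}_i$ absolutely continuous w.r.t. the full conditional $f(\cdot|\boldsymbol{x}_{-i})$. Let $\eta_i(\boldsymbol{x}_{-i})\ge 0$ be weight functions and $\zeta=\sum_{i=1}^d\mathbb{E}_{\boldsymbol{x}\sim f}[\eta_i(\boldsymbol{x}_{-i})]\in(0,\infty)$. Define $p_i(\boldsymbol{x})=\eta_i(\boldsymbol{x}_{-i})\,g(x_i|\boldsymbol{x}_{-i})/f(x_i|\boldsymbol{x}_{-i})$. wTGS chain: from $\boldsymbol{x}$, (1) sample $i$ with probability $p_i(\boldsymbol{x})/\sum_j p_j(\boldsymbol{x})$; (2) resample $x_i\sim g(\cdot|\boldsymbol{x}_{-i})$ keeping $\boldsymbol{x}_{-i}$; states are weighted by $Z(\boldsymbol{x})^{-1}$. $fZ$ denotes $\boldsymbol{x}\mapsto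 f(\boldsymbol{x})Z(\boldsymbol{x})$. *)

theory Defs
  imports "HOL-Analysis.Analysis"
begin

definition state_measure :: "nat \<Rightarrow> (nat \<Rightarrow> 'a measure) \<Rightarrow> (nat \<Rightarrow> 'a) measure" where
  "state_measure d M = PiM {..<d} M"

definition marg :: "(nat \<Rightarrow> 'a measure) \<Rightarrow> ((nat \<Rightarrow> 'a) \<Rightarrow> real) \<Rightarrow> nat \<Rightarrow> (nat \<Rightarrow> 'a) \<Rightarrow> real" where
  "marg M f i x = enn2real (\<integral>\<^sup>+ y. ennreal (f (x(i := y))) \<partial>M i)"

definition fcond :: "(nat \<Rightarrow> 'a measure) \<Rightarrow> ((nat \<Rightarrow> 'a) \<Rightarrow> real) \<Rightarrow> nat \<Rightarrow> (nat \<Rightarrow> 'a) \<Rightarrow> 'a \<Rightarrow> real" where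
  "fcond M f i x y = f (x(i := y)) / marg M f i x"

definition pw :: "(nat \<Rightarrow> 'a measure) \<Rightarrow> ((nat \<Rightarrow> 'a) \<Rightarrow> real) \<Rightarrow> (nat \<Rightarrow> (nat \<Rightarrow> 'a) \<Rightarrow> 'a \<Rightarrow> real)
    \<Rightarrow> (nat \<Rightarrow> (nat \<Rightarrow> 'a) \<Rightarrow> real) \<Rightarrow> nat \<Rightarrow> (nat \<Rightarrow> 'a) \<Rightarrow> real" where
  "pw M f g \<eta> i x = \<eta> i x * g i x (x i) / fcond M f i x (x i)"

definition zeta :: "nat \<Rightarrow> (nat \<Rightarrow> 'a measure) \<Rightarrow> ((nat \<Rightarrow> 'a) \<Rightarrow> real) \<Rightarrow> (nat \<Rightarrow> (nat \<Rightarrow> 'a) \<Rightarrow> real) \<Rightarrow> ennreal" where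
  "zeta d M f \<eta> = (\<Sum>i<d. \<integral>\<^sup>+ x. ennreal (f x * \<eta> i x) \<partial>state_measure d M)"

definition Zw :: "nat \<Rightarrow> (nat \<Rightarrow> 'a measure) \<Rightarrow> ((nat \<Rightarrow> 'a) \<Rightarrow> real) \<Rightarrow> (nat \<Rightarrow> (nat \<Rightarrow> 'a) \<Rightarrow> 'a \<Rightarrow> real)
    \<Rightarrow> (nat \<Rightarrow> (nat \<Rightarrow> 'a) \<Rightarrow> real) \<Rightarrow> (nat \<Rightarrow> 'a) \<Rightarrow> real" where
  "Zw d M f g \<eta> x = (\<Sum>i<d. pw M f g \<eta> i x) / enn2real (zeta d M f \<eta>)"

definition sel :: "nat \<Rightarrow> (nat \<Rightarrow> 'a measure) \<Rightarrow> ((nat \<Rightarrow> 'a) \<Rightarrow> real) \<Rightarrow> (nat \<Rightarrow> (nat \<Rightarrow> 'a) \<Rightarrow> 'a \<Rightarrow> real)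
    \<Rightarrow> (nat \<Rightarrow> (nat \<Rightarrow> 'a) \<Rightarrow> real) \<Rightarrow> nat \<Rightarrow> (nat \<Rightarrow> 'a) \<Rightarrow> real" where
  "sel d M f g \<eta> i x = pw M f g \<eta> i x / (\<Sum>j<d. pw M f g \<eta> j x)"

definition wtgs_kernel :: "nat \<Rightarrow> (nat \<Rightarrow> 'a measure) \<Rightarrow> ((nat \<Rightarrow> 'a) \<Rightarrow> real) \<Rightarrow> (nat \<Rightarrow> (nat \<Rightarrow> 'a) \<Rightarrow> 'a \<Rightarrow> real)
    \<Rightarrow> (nat \<Rightarrow> (nat \<Rightarrow> 'a) \<Rightarrow> real) \<Rightarrow> (nat \<Rightarrow> 'a) \<Rightarrow> (nat \<Rightarrow> 'a) set \<Rightarrow> ennreal" where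
  "wtgs_kernel d M f g \<eta> x A =
     (\<Sum>i<d. ennreal (sel d M f g \<eta> i x) *
        (\<integral>\<^sup>+ y. ennreal (g i x y) * indicator A (x(i := y)) \<partial>M i))"

definition reversible_wrt :: "'b measure \<Rightarrow> ('b \<Rightarrow> 'b set \<Rightarrow> ennreal) \<Rightarrow> bool" where
  "reversible_wrt N K \<longleftrightarrow>
     (\<forall>A\<in>sets N. \<forall>B\<in>sets N. (\<integral>\<^sup>+ x\<in>A. K x B \<partial>N) = (\<integral>\<^sup>+ x\<in>B. K x A \<partial>N))"

end

theory Submission
  imports Defs
begin

(*
  Let q_i(x) = f(x) Z(x) P(i selected | x) = f(x) p_i(x) / zeta.  As g(.|x_{-i}) is absolutely
  continuous w.r.t. f(.|x_{-i}), the quotient g/f(.|x_{-i}) in p_i cancels against f for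
  almost every x_i, so q_i(x) = W_i(x_{-i}) g(x_i|x_{-i}) with W_i = eta_i m_i / zeta, where m_i
  is the marginal density of x_{-i}.  Integrating out x_i gives the update frequency
  E_f[eta_i] / zeta.  For reversibility, the i-th summand of the integral of K(x, B) over A
  w.r.t. fZ becomes the integral of W_i(z) Q_i(z, A) Q_i(z, B) over x_{-i} = z, where
  Q_i(z, A) is the probability that resampling x_i from g(.|z) lands in A; this is symmetric
  in A and B.
*)

lemma nn_integral_PiM_split_coordinate:
  assumes "finite I" "i \<in> I" "\<And>j. j \<in> I \<Longrightarrow> sigma_finite_measure (M j)"
    and "F \<in> borel_measurable (PiM I M)"
  shows "(\<integral>\<^sup>+x. F x \<partial>PiM I M) = (\<integral>\<^sup>+z. \<integral>\<^sup>+u. F (z(i := u)) \<partial>M i \<partial>PiM (I - {i}) M)"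
proof -
  define M' where "M' j = (if j \<in> I then M j else count_space {})" for j
  interpret product_sigma_finite M'
    unfolding product_sigma_finite_def M'_def
    using assms(3) by (auto intro: sigma_finite_measure_count_space_countable)
  have "PiM J M = PiM J M'" if "J \<subseteq> I" for J
    using that by (intro PiM_cong) (auto simp: M'_def)
  moreover have "insert i (I - {i}) = I" "M' i = M i"
    using assms(2) by (auto simp: M'_def)
  ultimately show ?thesis
    using product_nn_integral_insert[of "I - {i}" i F] assms(1,4)
    by (metis Diff_iff Diff_subset finite_Diff insertI1 subset_refl)
qed

locale wtgs_setting =
  fixes d :: nat and M :: "nat \<Rightarrow> 'a measure"
    and f :: "(nat \<Rightarrow> 'a) \<Rightarrow> real"
    and g :: "nat \<Rightarrow> (nat \<Rightarrow> 'a) \<Rightarrow> 'a \<Rightarrow> real"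
    and \<eta> :: "nat \<Rightarrow> (nat \<Rightarrow> 'a) \<Rightarrow> real"
  assumes sf: "\<And>i. i < d \<Longrightarrow> sigma_finite_measure (M i)"
    and f_meas: "f \<in> borel_measurable (state_measure d M)"
    and f_nonneg: "\<And>x. x \<in> space (state_measure d M) \<Longrightarrow> 0 \<le> f x"
    and f_dens: "(\<integral>\<^sup>+ x. ennreal (f x) \<partial>state_measure d M) = 1"
    and g_meas: "\<And>i. i < d \<Longrightarrow> (\<lambda>(x, y). g i x y) \<in> borel_measurable (state_measure d M \<Otimes>\<^sub>M M i)"
    and g_nonneg: "\<And>i x y. i < d \<Longrightarrow> x \<in> space (state_measure d M) \<Longrightarrow> y \<in> space (M i) \<Longrightarrow> 0 \<le> g i x y"
    and g_dens: "\<And>i x. i < d \<Longrightarrow> x \<in> space (state_measure d M) \<Longrightarrow>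
                   (\<integral>\<^sup>+ y. ennreal (g i x y) \<partial>M i) = 1"
    and g_indep: "\<And>i x y. i < d \<Longrightarrow> x \<in> space (state_measure d M) \<Longrightarrow> y \<in> space (M i) \<Longrightarrow>
                   g i (x(i := y)) = g i x"
    and g_ac: "\<And>i x. i < d \<Longrightarrow> x \<in> space (state_measure d M) \<Longrightarrow> 0 < marg M f i x \<Longrightarrow>
                 absolutely_continuous (density (M i) (\<lambda>y. ennreal (fcond M f i x y)))
                                       (density (M i) (\<lambda>y. ennreal (g i x y)))"
    and eta_meas: "\<And>i. i < d \<Longrightarrow> \<eta> i \<in> borel_measurable (state_measure d M)"
    and eta_nonneg: "\<And>i x. i < d \<Longrightarrow> x \<in> space (state_measure d M) \<Longrightarrow> 0 \<le> \<eta> i x"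
    and eta_indep: "\<And>i x y. i < d \<Longrightarrow> x \<in> space (state_measure d M) \<Longrightarrow> y \<in> space (M i) \<Longrightarrow>
                   \<eta> i (x(i := y)) = \<eta> i x"
    and zeta_pos: "0 < zeta d M f \<eta>"
    and zeta_fin: "zeta d M f \<eta> < \<infinity>"
begin

abbreviation S :: "(nat \<Rightarrow> 'a) measure" where
  "S \<equiv> state_measure d M"

lemma space_state_nonempty: "space S \<noteq> {}"
proof
  assume "space S = {}"
  then have "(\<integral>\<^sup>+x. ennreal (f x) \<partial>S) = 0"
    by (simp add: nn_integral_empty)
  with f_dens show False by simp
qed

definition base :: "nat \<Rightarrow> 'a" where
  "base = (SOME x. x \<in> space S)"

lemma base_in_space: "base \<in> space S"
  unfolding base_def using space_state_nonempty by (simp add: some_in_eq)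

lemma fun_upd_in_space:
  "x \<in> space S \<Longrightarrow> i < d \<Longrightarrow> y \<in> space (M i) \<Longrightarrow> x(i := y) \<in> space S"
  by (auto simp: state_measure_def space_PiM PiE_iff extensional_def)

lemma component_in_space: "x \<in> space S \<Longrightarrow> i < d \<Longrightarrow> x i \<in> space (M i)"
  by (auto simp: state_measure_def space_PiM)

definition zeta_r :: real where
  "zeta_r = enn2real (zeta d M f \<eta>)"

lemma zeta_eq: "zeta d M f \<eta> = ennreal zeta_r"
  using zeta_fin by (simp add: zeta_r_def)

lemma zeta_r_pos: "0 < zeta_r"
  using zeta_pos by (simp add: zeta_eq)

lemma fcond_nonneg: "x \<in> space S \<Longrightarrow> i < d \<Longrightarrow> y \<in> space (M i) \<Longrightarrow> 0 \<le> fcond M f i x y"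
  unfolding fcond_def marg_def by (simp add: f_nonneg fun_upd_in_space)

lemma pw_nonneg: "x \<in> space S \<Longrightarrow> i < d \<Longrightarrow> 0 \<le> pw M f g \<eta> i x"
  unfolding pw_def
  by (simp add: eta_nonneg g_nonneg fcond_nonneg component_in_space)

lemma sel_nonneg: "x \<in> space S \<Longrightarrow> i < d \<Longrightarrow> 0 \<le> sel d M f g \<eta> i x"
  unfolding sel_def by (auto intro!: divide_nonneg_nonneg sum_nonneg pw_nonneg)

definition update_rate :: "nat \<Rightarrow> (nat \<Rightarrow> 'a) \<Rightarrow> real" where
  "update_rate i x = f x * Zw d M f g \<eta> x * sel d M f g \<eta> i x"

lemma update_rate_eq:
  assumes "x \<in> space S" "i < d"
  shows "update_rate i x = f x * pw M f g \<eta> i x / zeta_r"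
proof (cases "(\<Sum>j<d. pw M f g \<eta> j x) = 0")
  case True
  moreover have "pw M f g \<eta> i x \<le> (\<Sum>j<d. pw M f g \<eta> j x)"
    using assms by (intro member_le_sum) (auto simp: pw_nonneg)
  ultimately have "pw M f g \<eta> i x = 0"
    using pw_nonneg[OF assms] by simp
  with True show ?thesis
    by (simp add: update_rate_def Zw_def sel_def zeta_r_def)
qed (simp add: update_rate_def Zw_def sel_def zeta_r_def)

lemma measurable_fun_upd_state[measurable]:
  "i < d \<Longrightarrow> (\<lambda>\<omega>. (fst \<omega>)(i := snd \<omega>)) \<in> measurable (S \<Otimes>\<^sub>M M i) S"
  unfolding state_measure_def by (intro measurable_fun_upd[where J = "{..<d}"]) auto

lemma measurable_component[measurable]: "i < d \<Longrightarrow> (\<lambda>x. x i) \<in> measurable S (M i)"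
  unfolding state_measure_def by simp

lemma borel_measurable_nn_integral_coordinate[measurable (raw)]:
  "i < d \<Longrightarrow> case_prod F \<in> borel_measurable (N \<Otimes>\<^sub>M M i) \<Longrightarrow>
    (\<lambda>x. \<integral>\<^sup>+y. F x y \<partial>M i) \<in> borel_measurable N"
  using sigma_finite_measure.borel_measurable_nn_integral[OF sf] by blast

lemmas [measurable] = f_meas g_meas eta_meas

lemma marg_measurable[measurable]: "i < d \<Longrightarrow> marg M f i \<in> borel_measurable S"
  unfolding marg_def[abs_def] by measurable

lemma pw_measurable[measurable]: "i < d \<Longrightarrow> pw M f g \<eta> i \<in> borel_measurable S"
  unfolding pw_def[abs_def] fcond_def fun_upd_triv by measurable

lemma update_rate_measurable[measurable]: "i < d \<Longrightarrow> update_rate i \<in> borel_measurable S"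
  unfolding update_rate_def[abs_def] Zw_def sel_def zeta_r_def[symmetric] by measurable

definition resample_kernel :: "nat \<Rightarrow> (nat \<Rightarrow> 'a) \<Rightarrow> (nat \<Rightarrow> 'a) set \<Rightarrow> ennreal" where
  "resample_kernel i x B = (\<integral>\<^sup>+y. ennreal (g i x y) * indicator B (x(i := y)) \<partial>M i)"

context
  fixes i assumes i_less_d: "i < d"
begin

abbreviation rest :: "(nat \<Rightarrow> 'a) measure" where
  "rest \<equiv> PiM ({..<d} - {i}) M"

lemma state_measure_split: "S = PiM (insert i ({..<d} - {i})) M"
  using i_less_d by (simp add: state_measure_def insert_absorb)

lemma measurable_fun_upd_rest[measurable]:
  "(\<lambda>\<omega>. (fst \<omega>)(i := snd \<omega>)) \<in> measurable (rest \<Otimes>\<^sub>M M i) S"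
proof -
  have "(\<lambda>(z, u). z(i := u)) \<in> measurable (rest \<Otimes>\<^sub>M M i) (PiM (insert i ({..<d} - {i})) M)"
    by (rule measurable_add_dim)
  then show ?thesis
    by (simp only: state_measure_split[symmetric] split_beta')
qed

lemma resample_kernel_measurable[measurable]:
  assumes [measurable]: "B \<in> sets S"
  shows "(\<lambda>x. resample_kernel i x B) \<in> borel_measurable S"
  unfolding resample_kernel_def using i_less_d by measurable

lemma fun_upd_rest_in_space: "z \<in> space rest \<Longrightarrow> u \<in> space (M i) \<Longrightarrow> z(i := u) \<in> space S"
  using i_less_d by (auto simp: state_measure_def space_PiM PiE_iff extensional_def)

lemma measurable_fun_upd_fiber[measurable]: "z \<in> space rest \<Longrightarrow> (\<lambda>u. z(i := u)) \<in> measurable (M i) S"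
  unfolding state_measure_split by (rule measurable_component_update) auto

lemma nn_integral_state_split:
  "F \<in> borel_measurable S \<Longrightarrow> (\<integral>\<^sup>+x. F x \<partial>S) = (\<integral>\<^sup>+z. \<integral>\<^sup>+u. F (z(i := u)) \<partial>M i \<partial>rest)"
  unfolding state_measure_def using i_less_d sf
  by (intro nn_integral_PiM_split_coordinate) auto

text \<open>\<open>g i\<close> and \<open>\<eta> i\<close> do not depend on coordinate \<open>i\<close>; as functions on \<open>rest\<close> they are evaluated
  with that coordinate set to a fixed point.\<close>
definition frozen :: "((nat \<Rightarrow> 'a) \<Rightarrow> 'b) \<Rightarrow> (nat \<Rightarrow> 'a) \<Rightarrow> 'b" where
  "frozen F z = F (z(i := base i))"

lemma base_fun_upd_in_space: "z \<in> space rest \<Longrightarrow> z(i := base i) \<in> space S"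
  by (intro fun_upd_rest_in_space component_in_space base_in_space i_less_d)

lemma measurable_base_fun_upd[measurable]: "(\<lambda>z. z(i := base i)) \<in> measurable rest S"
  using i_less_d component_in_space[OF base_in_space i_less_d] unfolding state_measure_def
  by (intro measurable_fun_upd[where J = "{..<d} - {i}"]) auto

lemma frozen_measurable[measurable]:
  assumes [measurable]: "F \<in> borel_measurable S"
  shows "frozen F \<in> borel_measurable rest"
  unfolding frozen_def[abs_def] by measurable

lemma marg_measurable_rest[measurable]: "marg M f i \<in> borel_measurable rest"
  unfolding marg_def[abs_def] using i_less_d by measurable

lemma fun_upd_frozen:
  assumes "\<And>x y. x \<in> space S \<Longrightarrow> y \<in> space (M i) \<Longrightarrow> F (x(i := y)) = F x"
    and "z \<in> space rest" "u \<in> space (M i)"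
  shows "F (z(i := u)) = frozen F z"
  using assms(1)[OF base_fun_upd_in_space[OF assms(2)] assms(3)] by (simp add: frozen_def)

lemma frozen_g_measurable[measurable]: "z \<in> space rest \<Longrightarrow> frozen (g i) z \<in> borel_measurable (M i)"
  unfolding frozen_def using base_fun_upd_in_space i_less_d by measurable

lemma frozen_g_nonneg: "z \<in> space rest \<Longrightarrow> u \<in> space (M i) \<Longrightarrow> 0 \<le> frozen (g i) z u"
  unfolding frozen_def by (simp add: g_nonneg i_less_d base_fun_upd_in_space)

lemma frozen_eta_nonneg: "z \<in> space rest \<Longrightarrow> 0 \<le> frozen (\<eta> i) z"
  unfolding frozen_def by (simp add: eta_nonneg i_less_d base_fun_upd_in_space)

lemma marg_fun_upd[simp]: "marg M f i (x(i := u)) = marg M f i x"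
  by (simp add: marg_def)

definition weight :: "(nat \<Rightarrow> 'a) \<Rightarrow> real" where
  "weight z = frozen (\<eta> i) z * marg M f i z / zeta_r"

definition resample :: "(nat \<Rightarrow> 'a) \<Rightarrow> (nat \<Rightarrow> 'a) set \<Rightarrow> ennreal" where
  "resample z A = (\<integral>\<^sup>+u. ennreal (frozen (g i) z u) * indicator A (z(i := u)) \<partial>M i)"

lemma resample_kernel_fun_upd:
  "z \<in> space rest \<Longrightarrow> u \<in> space (M i) \<Longrightarrow> resample_kernel i (z(i := u)) B = resample z B"
  unfolding resample_kernel_def resample_def
  by (intro nn_integral_cong) (simp add: fun_upd_frozen[OF g_indep[OF i_less_d]])

lemma AE_frozen_g_zero:
  assumes z: "z \<in> space rest" and marg: "marg M f i z \<noteq> 0"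
  shows "AE u in M i. f (z(i := u)) = 0 \<longrightarrow> frozen (g i) z u = 0"
proof -
  let ?x = "z(i := base i)"
  have x: "?x \<in> space S"
    using z by (rule base_fun_upd_in_space)
  have "0 < marg M f i ?x"
    using marg by (simp add: marg_def order_less_le)
  then have ac: "absolutely_continuous (density (M i) (\<lambda>u. ennreal (fcond M f i ?x u)))
                                      (density (M i) (\<lambda>u. ennreal (g i ?x u)))"
    using g_ac[OF i_less_d x] by blast
  let ?N = "{u \<in> space (M i). f (z(i := u)) = 0}"
  have fcond_eq: "fcond M f i ?x u = f (z(i := u)) / marg M f i z" for u
    by (simp add: fcond_def)
  have "?N \<in> null_sets (density (M i) (\<lambda>u. ennreal (fcond M f i ?x u)))"
    using z by (subst null_sets_density_iff) (auto simp: fcond_eq)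
  then have "?N \<in> null_sets (density (M i) (\<lambda>u. ennreal (g i ?x u)))"
    using ac by (auto simp: absolutely_continuous_def)
  then have "AE u in M i. u \<in> ?N \<longrightarrow> ennreal (g i ?x u) = 0"
    using x i_less_d by (subst (asm) null_sets_density_iff) auto
  with AE_space show ?thesis
    by eventually_elim (use x i_less_d g_nonneg in \<open>force simp: frozen_def\<close>)
qed

lemma AE_update_rate_fun_upd:
  assumes z: "z \<in> space rest"
  shows "AE u in M i. update_rate i (z(i := u)) = weight z * frozen (g i) z u"
proof (cases "marg M f i z = 0")
  case True
  then show ?thesis
    by (intro AE_I2) (simp add: update_rate_eq fun_upd_rest_in_space[OF z] i_less_d
        pw_def fcond_def weight_def)
next
  case False
  from AE_frozen_g_zero[OF z False] AE_space show ?thesis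
  proof eventually_elim
    case (elim u)
    have "\<eta> i (z(i := u)) = frozen (\<eta> i) z" "g i (z(i := u)) = frozen (g i) z"
      using z elim by (simp_all add: fun_upd_frozen eta_indep g_indep i_less_d)
    with elim False show ?case
      by (simp add: update_rate_eq fun_upd_rest_in_space[OF z] i_less_d
          pw_def fcond_def weight_def)
  qed
qed

lemma nn_integral_update_rate_resample_kernel:
  assumes [measurable]: "A \<in> sets S" "B \<in> sets S"
  shows "(\<integral>\<^sup>+x. ennreal (update_rate i x) * indicator A x * resample_kernel i x B \<partial>S)
       = (\<integral>\<^sup>+z. ennreal (weight z) * resample z A * resample z B \<partial>rest)"
proof -
  have "(\<integral>\<^sup>+x. ennreal (update_rate i x) * indicator A x * resample_kernel i x B \<partial>S)
      = (\<integral>\<^sup>+z. \<integral>\<^sup>+u. ennreal (update_rate i (z(i := u))) * indicator A (z(i := u))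
                       * resample_kernel i (z(i := u)) B \<partial>M i \<partial>rest)"
    using i_less_d by (intro nn_integral_state_split) measurable
  also have "\<dots> = (\<integral>\<^sup>+z. ennreal (weight z) * resample z A * resample z B \<partial>rest)"
  proof (rule nn_integral_cong)
    fix z assume z: "z \<in> space rest"
    have "(\<integral>\<^sup>+u. ennreal (update_rate i (z(i := u))) * indicator A (z(i := u))
                  * resample_kernel i (z(i := u)) B \<partial>M i)
        = (\<integral>\<^sup>+u. (ennreal (weight z) * resample z B)
                  * (ennreal (frozen (g i) z u) * indicator A (z(i := u))) \<partial>M i)"
      by (rule nn_integral_cong_AE, use AE_update_rate_fun_upd[OF z] AE_space in eventually_elim)
         (use z in \<open>simp add: resample_kernel_fun_upd ennreal_mult'' frozen_g_nonneg ac_simps\<close>)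
    also have "\<dots> = ennreal (weight z) * resample z B * resample z A"
      unfolding resample_def[of z A] using z by (intro nn_integral_cmult) measurable
    finally show "(\<integral>\<^sup>+u. ennreal (update_rate i (z(i := u))) * indicator A (z(i := u))
                  * resample_kernel i (z(i := u)) B \<partial>M i)
        = ennreal (weight z) * resample z A * resample z B"
      by (simp only: ac_simps)
  qed
  finally show ?thesis .
qed

lemma AE_nn_integral_fiber_eq_marg:
  "AE z in rest. (\<integral>\<^sup>+u. ennreal (f (z(i := u))) \<partial>M i) = ennreal (marg M f i z)"
proof -
  have "(\<integral>\<^sup>+z. \<integral>\<^sup>+u. ennreal (f (z(i := u))) \<partial>M i \<partial>rest) = 1"
    using f_dens nn_integral_state_split[of "\<lambda>x. ennreal (f x)"] by simp
  then have "AE z in rest. (\<integral>\<^sup>+u. ennreal (f (z(i := u))) \<partial>M i) \<noteq> \<infinity>"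
    using i_less_d by (intro nn_integral_PInf_AE) simp_all
  then show ?thesis
    by eventually_elim (simp add: marg_def less_top)
qed

lemma nn_integral_f_eta:
  "(\<integral>\<^sup>+x. ennreal (f x * \<eta> i x) \<partial>S) = (\<integral>\<^sup>+z. ennreal (frozen (\<eta> i) z * marg M f i z) \<partial>rest)"
proof -
  have "(\<integral>\<^sup>+x. ennreal (f x * \<eta> i x) \<partial>S)
      = (\<integral>\<^sup>+z. \<integral>\<^sup>+u. ennreal (f (z(i := u))) * ennreal (frozen (\<eta> i) z) \<partial>M i \<partial>rest)"
    using i_less_d
    by (subst nn_integral_state_split, measurable)
       (intro nn_integral_cong, simp add: fun_upd_frozen eta_indep ennreal_mult'' frozen_eta_nonneg)
  also have "\<dots> = (\<integral>\<^sup>+z. (\<integral>\<^sup>+u. ennreal (f (z(i := u))) \<partial>M i) * ennreal (frozen (\<eta> i) z) \<partial>rest)"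
    by (intro nn_integral_cong nn_integral_multc) measurable
  also have "\<dots> = (\<integral>\<^sup>+z. ennreal (frozen (\<eta> i) z * marg M f i z) \<partial>rest)"
    by (rule nn_integral_cong_AE, use AE_nn_integral_fiber_eq_marg AE_space in eventually_elim)
       (simp add: ennreal_mult'' frozen_eta_nonneg mult.commute)
  finally show ?thesis .
qed

lemma nn_integral_update_rate:
  "(\<integral>\<^sup>+x. ennreal (update_rate i x) \<partial>S) = (\<integral>\<^sup>+x. ennreal (f x * \<eta> i x) \<partial>S) / zeta d M f \<eta>"
proof -
  have "(\<integral>\<^sup>+x. ennreal (update_rate i x) \<partial>S)
      = (\<integral>\<^sup>+z. \<integral>\<^sup>+u. ennreal (update_rate i (z(i := u))) \<partial>M i \<partial>rest)"
    using i_less_d by (intro nn_integral_state_split) measurable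
  also have "\<dots> = (\<integral>\<^sup>+z. ennreal (weight z) * \<integral>\<^sup>+u. ennreal (frozen (g i) z u) \<partial>M i \<partial>rest)"
  proof (rule nn_integral_cong)
    fix z assume z: "z \<in> space rest"
    have "(\<integral>\<^sup>+u. ennreal (update_rate i (z(i := u))) \<partial>M i)
        = (\<integral>\<^sup>+u. ennreal (weight z) * ennreal (frozen (g i) z u) \<partial>M i)"
      by (rule nn_integral_cong_AE, use AE_update_rate_fun_upd[OF z] AE_space in eventually_elim)
         (use z in \<open>simp add: ennreal_mult'' frozen_g_nonneg\<close>)
    also have "\<dots> = ennreal (weight z) * \<integral>\<^sup>+u. ennreal (frozen (g i) z u) \<partial>M i"
      using z by (intro nn_integral_cmult) measurable
    finally show "(\<integral>\<^sup>+u. ennreal (update_rate i (z(i := u))) \<partial>M i)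
        = ennreal (weight z) * \<integral>\<^sup>+u. ennreal (frozen (g i) z u) \<partial>M i" .
  qed
  also have "\<dots> = (\<integral>\<^sup>+z. ennreal (frozen (\<eta> i) z * marg M f i z) / zeta d M f \<eta> \<partial>rest)"
  proof (rule nn_integral_cong)
    fix z assume z: "z \<in> space rest"
    have "0 \<le> frozen (\<eta> i) z * marg M f i z"
      using z by (simp add: frozen_eta_nonneg marg_def)
    then show "ennreal (weight z) * \<integral>\<^sup>+u. ennreal (frozen (g i) z u) \<partial>M i
        = ennreal (frozen (\<eta> i) z * marg M f i z) / zeta d M f \<eta>"
      using g_dens[OF i_less_d base_fun_upd_in_space[OF z]] zeta_r_pos
      by (simp add: frozen_def[of "g i"] weight_def zeta_eq divide_ennreal)
  qed
  also have "\<dots> = (\<integral>\<^sup>+x. ennreal (f x * \<eta> i x) \<partial>S) / zeta d M f \<eta>"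
    unfolding nn_integral_f_eta by (rule nn_integral_divide) (use i_less_d in measurable)
  finally show ?thesis .
qed

end

lemma nn_integral_density_wtgs_kernel:
  assumes [measurable]: "A \<in> sets S" "B \<in> sets S"
  shows "(\<integral>\<^sup>+x\<in>A. wtgs_kernel d M f g \<eta> x B \<partial>density S (\<lambda>x. ennreal (f x * Zw d M f g \<eta> x)))
       = (\<Sum>i<d. \<integral>\<^sup>+z. ennreal (weight i z) * resample i z A * resample i z B \<partial>PiM ({..<d} - {i}) M)"
proof -
  have kernel_eq: "wtgs_kernel d M f g \<eta> x B = (\<Sum>i<d. ennreal (sel d M f g \<eta> i x) * resample_kernel i x B)"
    for x by (simp add: wtgs_kernel_def resample_kernel_def)
  have rate_eq: "ennreal (update_rate i x) = ennreal (f x * Zw d M f g \<eta> x) * ennreal (sel d M f g \<eta> i x)"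
    if "x \<in> space S" "i < d" for x i
    using that by (simp add: update_rate_def ennreal_mult'' sel_nonneg)
  have "(\<integral>\<^sup>+x\<in>A. wtgs_kernel d M f g \<eta> x B \<partial>density S (\<lambda>x. ennreal (f x * Zw d M f g \<eta> x)))
      = (\<integral>\<^sup>+x. ennreal (f x * Zw d M f g \<eta> x) * (wtgs_kernel d M f g \<eta> x B * indicator A x) \<partial>S)"
    unfolding kernel_eq Zw_def sel_def zeta_r_def[symmetric] by (rule nn_integral_density) measurable
  also have "\<dots> = (\<integral>\<^sup>+x. (\<Sum>i<d. ennreal (update_rate i x) * indicator A x * resample_kernel i x B) \<partial>S)"
    by (intro nn_integral_cong, simp only: kernel_eq sum_distrib_left sum_distrib_right,
        intro sum.cong refl) (simp add: rate_eq ac_simps)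
  also have "\<dots> = (\<Sum>i<d. \<integral>\<^sup>+x. ennreal (update_rate i x) * indicator A x * resample_kernel i x B \<partial>S)"
    by (intro nn_integral_sum) measurable
  also have "\<dots> = (\<Sum>i<d. \<integral>\<^sup>+z. ennreal (weight i z) * resample i z A * resample i z B \<partial>PiM ({..<d} - {i}) M)"
    by (intro sum.cong refl nn_integral_update_rate_resample_kernel) auto
  finally show ?thesis .
qed

lemma wtgs_kernel_reversible:
  "reversible_wrt (density S (\<lambda>x. ennreal (f x * Zw d M f g \<eta> x))) (wtgs_kernel d M f g \<eta>)"
  unfolding reversible_wrt_def sets_density
  by (intro ballI, subst (1 2) nn_integral_density_wtgs_kernel) (simp_all add: ac_simps)

end

theorem proposition6:
  fixes d :: nat and M :: "nat \<Rightarrow> 'a measure"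
    and f :: "(nat \<Rightarrow> 'a) \<Rightarrow> real"
    and g :: "nat \<Rightarrow> (nat \<Rightarrow> 'a) \<Rightarrow> 'a \<Rightarrow> real"
    and \<eta> :: "nat \<Rightarrow> (nat \<Rightarrow> 'a) \<Rightarrow> real"
  assumes sf: "\<And>i. i < d \<Longrightarrow> sigma_finite_measure (M i)"
    and f_meas: "f \<in> borel_measurable (state_measure d M)"
    and f_nonneg: "\<And>x. x \<in> space (state_measure d M) \<Longrightarrow> 0 \<le> f x"
    and f_dens: "(\<integral>\<^sup>+ x. ennreal (f x) \<partial>state_measure d M) = 1"
    and g_meas: "\<And>i. i < d \<Longrightarrow> (\<lambda>(x, y). g i x y) \<in> borel_measurable (state_measure d M \<Otimes>\<^sub>M M i)"
    and g_nonneg: "\<And>i x y. i < d \<Longrightarrow> x \<in> space (state_measure d M) \<Longrightarrow> y \<in> space (M i) \<Longrightarrow> 0 \<le> g i x y"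
    and g_dens: "\<And>i x. i < d \<Longrightarrow> x \<in> space (state_measure d M) \<Longrightarrow>
                   (\<integral>\<^sup>+ y. ennreal (g i x y) \<partial>M i) = 1"
    and g_indep: "\<And>i x y. i < d \<Longrightarrow> x \<in> space (state_measure d M) \<Longrightarrow> y \<in> space (M i) \<Longrightarrow>
                   g i (x(i := y)) = g i x"
    and g_ac: "\<And>i x. i < d \<Longrightarrow> x \<in> space (state_measure d M) \<Longrightarrow> 0 < marg M f i x \<Longrightarrow>
                 absolutely_continuous (density (M i) (\<lambda>y. ennreal (fcond M f i x y)))
                                       (density (M i) (\<lambda>y. ennreal (g i x y)))"
    and eta_meas: "\<And>i. i < d \<Longrightarrow> \<eta> i \<in> borel_measurable (state_measure d M)"
    and eta_nonneg: "\<And>i x. i < d \<Longrightarrow> x \<in> space (state_measure d M) \<Longrightarrow> 0 \<le> \<eta> i x"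
    and eta_indep: "\<And>i x y. i < d \<Longrightarrow> x \<in> space (state_measure d M) \<Longrightarrow> y \<in> space (M i) \<Longrightarrow>
                   \<eta> i (x(i := y)) = \<eta> i x"
    and zeta_pos: "0 < zeta d M f \<eta>"
    and zeta_fin: "zeta d M f \<eta> < \<infinity>"
  shows "reversible_wrt (density (state_measure d M) (\<lambda>x. ennreal (f x * Zw d M f g \<eta> x)))
                        (wtgs_kernel d M f g \<eta>) \<and>
         (\<forall>i<d.
           (\<integral>\<^sup>+ x. ennreal (f x * Zw d M f g \<eta> x * sel d M f g \<eta> i x) \<partial>state_measure d M)
           = (\<integral>\<^sup>+ x. ennreal (f x * \<eta> i x) \<partial>state_measure d M) / zeta d M f \<eta>)"
proof -
  interpret wtgs_setting d M f g \<eta>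
    by (rule wtgs_setting.intro) (fact assms)+
  show ?thesis
    using wtgs_kernel_reversible nn_integral_update_rate by (simp add: update_rate_def)
qed

end
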